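(* For every $t\ge0$, every $\alpha\ge1$ and every $f\in F_0(G)$, the interacting particle system started from $f$ satisfies $\mathbb E_f\|f_t\|_\alpha^\alpha<\infty$.
   Context: A graph is a quadruple $G=(V,E,K,m)$: $V$ is a finite or countable set of nodes, which are elements of a real Hilbert space $\mathcal H$ with inner product "$\cdot$" and norm $|\cdot|$; $E$ is a set of undirected edges (at most one edge between any two distinct nodes, no self-loops); the edge between $x$ and $y$ is written $\langle x,y\rangle=\langle y,x\rangle$, and $y\sim x$ means this edge exists; $K=(k_{xy})_{x,y\in V}$ with $k_{xy}=k_{yx}\ge0$ and $k_{xy}=0$ if there is no edge; $m=(m_x)_{x\in V}$ with $m_x>0$. Let $e_{xy}=(y-x)/|y-x|$. Assume $d_0=\sup_{x\in V}\#\{y:y\sim x\}<\infty$, set $d=\max\{d_0,2\}$, and assume $M=\max\{\sup_{x\in V}m_x^{-1},\sup_{\langle x,y\rangle\in E}k_{xy}\}<\infty$. $V=V_0\cup V_1$ is a fixed partition into disjoint sets. $F(G)$ is the set of functions $f$ assigning a real number $f(x)$ to each $x\in V$ and a vector $f(\langle x,y\rangle)\in\mathcal H$ that is a real multiple of $y-x$ to each edge. For $1\le\alpha<\infty$, $\|f\|_\alpha=\big(\sum_{x\in V}|f(x)|^\alpha/m_x+\sum_{\langle x,y\rangle\in E}k_{xy}|f(\langle x,y\rangle)|^\alpha\big)^{1/\alpha}$, and $\|f\|_\infty=\max\{\sup_x|f(x)|,\sup_{\langle x,y\rangle}|f(\langle x,y\rangle)|\}$. $F_0(G)$ is the set of $f\in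 F(G)$ with finitely many nonzero values such that $|f(x)|\in\mathbb Z$ and $|f(\langle x,y\rangle)|\in\mathbb Z$ for all nodes and edges. The interacting particle system (IPS) $(f_t)_{t\ge0}$ is the continuous-time Markov jump process on $F_0(G)$ with the following transitions from state $f$: (i) for each $x\in V$, at rate $|f(x)|/m_x$, for every $y\sim x$ the edge value $f(\langle x,y\rangle)$ is replaced by $f(\langle x,y\rangle)+\mathrm{sgn}(f(x))\,e_{yx}$ (all other values unchanged); (ii) for each edge $\langle x,y\rangle$, at rate $k_{xy}|f(\langle x,y\rangle)|$, with $s=\mathrm{sgn}(f(\langle x,y\rangle)\cdot e_{xy})$, the value $f(x)$ is replaced by $f(x)+s$ if $x\in V_0$ and $f(y)$ by $f(y)-s$ if $y\in V_0$ (values at nodes of $V_1$ never change; this rule is symmetric in $x,y$). $P_f,\mathbb E_f$ denote probability and expectation given $f_0=f$. $\tau_0=0$, $\tau_n$ is the time of the $n$-th jump, $\xi_n=\tau_n-\tau_{n-1}$, $h_n=f_{\tau_n}$, and $\eta_t=\sup\{n:\tau_n\le t\}$. *)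

theory Defs
  imports "HOL-Probability.Probability"
begin

text \<open>A state of the IPS: node values (extended by 0 outside V) and edge values
  indexed by unordered edges, i.e. doubleton sets {x,y} (extended by 0 outside E).\<close>
type_synonym 'h state = "('h \<Rightarrow> real) \<times> ('h set \<Rightarrow> 'h)"

type_synonym 'h event = "'h + 'h set"

definition other :: "'h set \<Rightarrow> 'h \<Rightarrow> 'h" where
  "other e z = (THE w. e = {z, w})"

text \<open>k on an unordered edge e = {x,y}: k x y (well defined since k is symmetric).\<close>
definition edge_weight :: "('h \<Rightarrow> 'h \<Rightarrow> real) \<Rightarrow> 'h set \<Rightarrow> real" where
  "edge_weight k e = (let z = (SOME z. z \<in> e) in k z (other e z))"

definition F0 :: "'h::real_inner set \<Rightarrow> 'h set set \<Rightarrow> 'h state set" where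
  "F0 V E = {(a, b).
      (\<forall>x. x \<notin> V \<longrightarrow> a x = 0) \<and> (\<forall>e. e \<notin> E \<longrightarrow> b e = 0)
    \<and> (\<forall>x y. {x, y} \<in> E \<longrightarrow> (\<exists>c. b {x, y} = c *\<^sub>R (y - x)))
    \<and> finite {x. a x \<noteq> 0} \<and> finite {e. b e \<noteq> 0}
    \<and> (\<forall>x. \<bar>a x\<bar> \<in> \<int>) \<and> (\<forall>e. norm (b e) \<in> \<int>)}"

definition normpow :: "'h set \<Rightarrow> 'h set set \<Rightarrow> ('h \<Rightarrow> real) \<Rightarrow> ('h \<Rightarrow> 'h \<Rightarrow> real)
    \<Rightarrow> real \<Rightarrow> 'h::real_normed_vector state \<Rightarrow> real" where
  "normpow V E m k \<alpha> g =
     (\<Sum>x\<in>{x\<in>V. fst g x \<noteq> 0}. \<bar>fst g x\<bar> powr \<alpha> / m x)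
   + (\<Sum>e\<in>{e\<in>E. snd g e \<noteq> 0}. edge_weight k e * norm (snd g e) powr \<alpha>)"

definition rate :: "('h \<Rightarrow> real) \<Rightarrow> ('h \<Rightarrow> 'h \<Rightarrow> real) \<Rightarrow> 'h::real_normed_vector state
    \<Rightarrow> 'h event \<Rightarrow> real" where
  "rate m k g evt = (case evt of
       Inl x \<Rightarrow> \<bar>fst g x\<bar> / m x
     | Inr e \<Rightarrow> edge_weight k e * norm (snd g e))"

definition node_jump :: "'h set set \<Rightarrow> 'h::real_normed_vector state \<Rightarrow> 'h \<Rightarrow> 'h state" where
  "node_jump E g x = (fst g, \<lambda>e. if e \<in> E \<and> x \<in> e
       then snd g e + sgn (fst g x) *\<^sub>R ((x - other e x) /\<^sub>R norm (x - other e x))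
       else snd g e)"

text \<open>Transition (ii) at e = {x,y}: with s = sgn(f(e) \<bullet> e_xy), f(x) := f(x) + s if x \<in> V0 and
  f(y) := f(y) - s if y \<in> V0. Written symmetrically: endpoint z with other endpoint w
  gets sgn(f(e) \<bullet> (w - z)) added (sign of the dot product with e_zw).\<close>
definition edge_jump :: "'h set \<Rightarrow> 'h::real_inner state \<Rightarrow> 'h set \<Rightarrow> 'h state" where
  "edge_jump V0 g e = (\<lambda>z. if z \<in> e \<and> z \<in> V0
       then fst g z + sgn (snd g e \<bullet> (other e z - z)) else fst g z, snd g)"

definition jump :: "'h set \<Rightarrow> 'h set set \<Rightarrow> 'h::real_inner state \<Rightarrow> 'h event \<Rightarrow> 'h state" where
  "jump V0 E g evt = (case evt of Inl x \<Rightarrow> node_jump E g x | Inr e \<Rightarrow> edge_jump V0 g e)"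

text \<open>One step of the jump process, driven by unit-rate exponential clocks c (one per
  possible transition; competing-clocks construction): the transition with the smallest
  clock c/rate fires; the holding time is that minimum (\<infinity> if all rates vanish).\<close>
definition step :: "('h \<Rightarrow> real) \<Rightarrow> ('h \<Rightarrow> 'h \<Rightarrow> real) \<Rightarrow> 'h set \<Rightarrow> 'h set set
    \<Rightarrow> 'h::real_inner state \<Rightarrow> ('h event \<Rightarrow> real) \<Rightarrow> 'h state \<times> ereal" where
  "step m k V0 E g c = (let A = {evt. 0 < rate m k g evt} in
     if A = {} then (g, \<infinity>)
     else let evt = arg_min_on (\<lambda>evt. c evt / rate m k g evt) A
          in (jump V0 E g evt, ereal (c evt / rate m k g evt)))"

primrec jchain :: "('h \<Rightarrow> real) \<Rightarrow> ('h \<Rightarrow> 'h \<Rightarrow> real) \<Rightarrow> 'h set \<Rightarrow> 'h set set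
    \<Rightarrow> 'h::real_inner state \<Rightarrow> (nat \<times> 'h event \<Rightarrow> real) \<Rightarrow> nat \<Rightarrow> 'h state \<times> ereal" where
  "jchain m k V0 E f \<omega> 0 = (f, 0)"
| "jchain m k V0 E f \<omega> (Suc n) =
     (let (g, \<tau>) = jchain m k V0 E f \<omega> n;
          (g', \<xi>) = step m k V0 E g (\<lambda>evt. \<omega> (n, evt))
      in (g', \<tau> + \<xi>))"

text \<open>f_t = h_{\<eta>_t} with \<eta>_t = sup {n. \<tau>_n \<le> t}; None if \<eta>_t = \<infinity> (explosion before t).\<close>
definition ips_state :: "('h \<Rightarrow> real) \<Rightarrow> ('h \<Rightarrow> 'h \<Rightarrow> real) \<Rightarrow> 'h set \<Rightarrow> 'h set set
    \<Rightarrow> 'h::real_inner state \<Rightarrow> (nat \<times> 'h event \<Rightarrow> real) \<Rightarrow> real \<Rightarrow> 'h state option" where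
  "ips_state m k V0 E f \<omega> t =
     (let N = {n. snd (jchain m k V0 E f \<omega> n) \<le> ereal t}
      in if finite N then Some (fst (jchain m k V0 E f \<omega> (Max N))) else None)"

definition clock_space :: "(nat \<times> 'h event \<Rightarrow> real) measure" where
  "clock_space = PiM UNIV (\<lambda>_. density lborel (exponential_density 1))"

definition expected_normpow :: "'h set \<Rightarrow> 'h set set \<Rightarrow> ('h \<Rightarrow> real) \<Rightarrow> ('h \<Rightarrow> 'h \<Rightarrow> real)
    \<Rightarrow> 'h set \<Rightarrow> real \<Rightarrow> 'h::real_inner state \<Rightarrow> real \<Rightarrow> ennreal" where
  "expected_normpow V E m k V0 \<alpha> f t =
     (\<integral>\<^sup>+ \<omega>. (case ips_state m k V0 E f \<omega> t of
                 None \<Rightarrow> \<infinity>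
               | Some g \<Rightarrow> ennreal (normpow V E m k \<alpha> g)) \<partial>clock_space)"

end

theory Submission
  imports Defs
begin

text \<open>Call the mass of a state the sum of the absolute values of all its node and edge
  entries. A jump raises the mass by at most d + 2, and the total jump rate is at most M times
  the mass. In the competing-clocks construction, the indicator that a given transition fires,
  discounted by exp(-\<theta> \<xi>) for the holding time \<xi>, has expectation rate / (total rate + \<theta>);
  as the clocks of different steps are independent, E exp(-\<theta> \<tau>_n) is at most the product
  over i < n of M s_i / (M s_i + \<theta>), where s_i = s + i (d + 2). For \<theta> = p M (s + 1) (d + 2)
  with an integer p this product is O(n^-p). Now the norm of f_t is at most the sum over n of
  the norm of h_n times [\<tau>_n \<le> t] (a divergent sum on explosion), the norm of h_n grows
  polynomially in n, and P(\<tau>_n \<le> t) \<le> exp(\<theta> t) E exp(-\<theta> \<tau>_n); so the expectation is finite.\<close>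


lemma other_doubleton: "x \<noteq> y \<Longrightarrow> other {x, y} x = y"
  unfolding other_def by (rule the_equality) (auto simp: doubleton_eq_iff)

lemma edge_weight_doubleton:
  assumes "x \<noteq> y"
  shows "edge_weight k {x, y} = k x y \<or> edge_weight k {x, y} = k y x"
proof -
  define z where "z = (SOME z. z \<in> {x, y})"
  have "z \<in> {x, y}" unfolding z_def by (rule someI) auto
  moreover have "other {x, y} y = x" using other_doubleton[of y x] assms by (simp add: insert_commute)
  ultimately show ?thesis using other_doubleton[OF assms]
    unfolding edge_weight_def z_def[symmetric] Let_def by auto
qed

lemma sum_norm_perturbation_le:
  fixes a b :: "'a \<Rightarrow> 'b::real_normed_vector"
  assumes fin: "finite {z. a z \<noteq> 0}" "finite T"
    and le: "\<And>z. norm (b z) \<le> norm (a z) + (if z \<in> T then 1 else 0)"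
  shows "finite {z. b z \<noteq> 0}"
    and "(\<Sum>z\<in>{z. b z \<noteq> 0}. norm (b z)) \<le> (\<Sum>z\<in>{z. a z \<noteq> 0}. norm (a z)) + card T"
proof -
  let ?S = "{z. a z \<noteq> 0} \<union> T"
  have finS: "finite ?S" using fin by simp
  have supp: "{z. b z \<noteq> 0} \<subseteq> ?S"
  proof
    fix z assume "z \<in> {z. b z \<noteq> 0}"
    moreover have "z \<notin> ?S \<Longrightarrow> norm (b z) \<le> 0" using le[of z] by simp
    ultimately show "z \<in> ?S" by auto
  qed
  then show "finite {z. b z \<noteq> 0}" using finS by (rule finite_subset)
  have "(\<Sum>z\<in>{z. b z \<noteq> 0}. norm (b z)) = (\<Sum>z\<in>?S. norm (b z))"
    using finS supp by (intro sum.mono_neutral_left) auto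
  also have "\<dots> \<le> (\<Sum>z\<in>?S. norm (a z) + (if z \<in> T then 1 else 0))"
    by (intro sum_mono le)
  also have "\<dots> = (\<Sum>z\<in>?S. norm (a z)) + (\<Sum>z\<in>?S. if z \<in> T then 1 else 0)"
    by (rule sum.distrib)
  also have "(\<Sum>z\<in>?S. if z \<in> T then 1 else 0) = (\<Sum>z\<in>{z\<in>?S. z \<in> T}. 1::real)"
    using finS by (rule sum.inter_filter[symmetric])
  also have "{z\<in>?S. z \<in> T} = T" by blast
  also have "(\<Sum>z\<in>?S. norm (a z)) = (\<Sum>z\<in>{z. a z \<noteq> 0}. norm (a z))"
    using finS by (intro sum.mono_neutral_right) auto
  finally show "(\<Sum>z\<in>{z. b z \<noteq> 0}. norm (b z)) \<le> (\<Sum>z\<in>{z. a z \<noteq> 0}. norm (a z)) + card T"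
    by simp
qed

lemma divide_self_add_mono:
  fixes x y t :: real
  assumes "0 \<le> x" "x \<le> y" "0 < t"
  shows "x / (x + t) \<le> y / (y + t)"
proof -
  have "x * (y + t) \<le> y * (x + t)"
    using mult_right_mono[OF assms(2), of t] assms by (simp add: algebra_simps)
  then show ?thesis using assms by (simp add: divide_simps)
qed

lemma prod_ratio_eq_fact:
  "(\<Prod>i<n. real (i + 1) / real (i + 1 + p)) = fact n * fact p / fact (n + p)"
proof (induction n)
  case (Suc n)
  have "(fact (Suc n + p) :: real) = real (n + p + 1) * fact (n + p)"
    by (simp add: algebra_simps)
  moreover have "(0::real) < fact (n + p)" "(0::real) < real (n + 1 + p)" by auto
  ultimately show ?case unfolding prod.lessThan_Suc Suc.IH by (simp add: field_simps)
qed simp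

lemma fact_mult_power_le_fact: "fact n * real (n + 1) ^ p \<le> (fact (n + p) :: real)"
proof (induction p)
  case (Suc p)
  have "fact n * real (n + 1) ^ Suc p = real (n + 1) * (fact n * real (n + 1) ^ p)" by simp
  also have "\<dots> \<le> real (n + p + 1) * fact (n + p)"
    using Suc.IH by (intro mult_mono) auto
  also have "\<dots> = fact (n + Suc p)" by (simp add: algebra_simps)
  finally show ?case .
qed simp

lemma prod_ratio_le_fact_div_power:
  "(\<Prod>i<n. real (i + 1) / real (i + 1 + p)) \<le> fact p / real (n + 1) ^ p"
proof -
  have pos: "(0::real) < fact n" "(0::real) < real (n + 1) ^ p" by auto
  have "(\<Prod>i<n. real (i + 1) / real (i + 1 + p)) = fact p * fact n / fact (n + p)"
    by (subst prod_ratio_eq_fact) (simp add: mult.commute)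
  also have "\<dots> \<le> fact p * fact n / (fact n * real (n + 1) ^ p)"
    using pos fact_mult_power_le_fact[of n p] by (intro divide_left_mono mult_pos_pos) auto
  also have "\<dots> = fact p / real (n + 1) ^ p" using pos by simp
  finally show ?thesis .
qed

lemma powr_le_mult_powr:
  fixes y S \<alpha> :: real
  assumes "0 < y" "y \<le> S" "1 \<le> \<alpha>"
  shows "y powr \<alpha> \<le> y * (S + 1) powr (\<alpha> - 1)"
proof -
  have "y powr \<alpha> = y * y powr (\<alpha> - 1)"
    using assms powr_add[of y 1 "\<alpha> - 1"] by simp
  also have "\<dots> \<le> y * (S + 1) powr (\<alpha> - 1)"
    using assms by (intro mult_left_mono powr_mono2) auto
  finally show ?thesis .
qed

lemma ennreal_le_suminf: "(u n :: ennreal) \<le> (\<Sum>n. u n)"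
  using sum_le_suminf[OF summableI, of "{n}" u] by simp

lemma suminf_ennreal_eq_top_if_infinite:
  fixes u :: "nat \<Rightarrow> ennreal"
  assumes "infinite {n. 1 \<le> u n}"
  shows "(\<Sum>n. u n) = \<infinity>"
proof (rule ccontr)
  assume "(\<Sum>n. u n) \<noteq> \<infinity>"
  then obtain q where q: "(\<Sum>n. u n) < of_nat q"
    using ennreal_Ex_less_of_nat by (auto simp: less_top)
  obtain S where S: "finite S" "card S = q" "S \<subseteq> {n. 1 \<le> u n}"
    using infinite_arbitrarily_large[OF assms] by blast
  have "(of_nat q :: ennreal) = (\<Sum>n\<in>S. 1)" using S by simp
  also have "\<dots> \<le> (\<Sum>n\<in>S. u n)" using S by (intro sum_mono) auto
  also have "\<dots> \<le> (\<Sum>n. u n)" by (rule sum_le_suminf) (auto simp: S)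
  finally show False using q by simp
qed

section \<open>Competing exponential clocks\<close>

abbreviation Exp1 :: "real measure" where
  "Exp1 \<equiv> density lborel (exponential_density 1)"

lemma prob_space_Exp1: "prob_space Exp1"
  by (rule prob_space_exponential_density) simp

lemma product_prob_space_Exp1: "product_prob_space (\<lambda>_. Exp1)"
  by (rule product_prob_spaceI) (rule prob_space_Exp1)

lemma borel_measurable_component_Exp1:
  assumes "i \<in> I"
  shows "(\<lambda>x. x i) \<in> borel_measurable (PiM I (\<lambda>_. Exp1))"
proof -
  have "(\<lambda>x. x i) \<in> measurable (PiM I (\<lambda>_. Exp1)) Exp1"
    using assms by (rule measurable_component_singleton)
  moreover have "measurable (PiM I (\<lambda>_. Exp1)) Exp1 = borel_measurable (PiM I (\<lambda>_. Exp1))"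
    by (rule measurable_cong_sets) simp_all
  ultimately show ?thesis by simp
qed

lemma AE_Exp1_nonneg: "AE y in Exp1. 0 \<le> y"
  by (subst AE_density) (auto simp: exponential_density_def)

lemma nn_integral_exponential_density:
  assumes "0 < l"
  shows "(\<integral>\<^sup>+x. ennreal (exponential_density l x) \<partial>lborel) = 1"
proof -
  interpret prob_space "density lborel (exponential_density l)"
    by (rule prob_space_exponential_density[OF assms])
  have "emeasure (density lborel (exponential_density l)) UNIV = 1"
    using emeasure_space_1 by simp
  then show ?thesis
    by (subst (asm) emeasure_density) auto
qed

lemma nn_integral_Exp1_tail:
  assumes c: "0 \<le> c"
  shows "(\<integral>\<^sup>+z. indicator {c..} z \<partial>Exp1) = ennreal (exp (- c))"
proof -
  have "(\<integral>\<^sup>+z. indicator {c..} z \<partial>Exp1)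
      = (\<integral>\<^sup>+z. ennreal (exponential_density 1 z) * indicator {c..} z \<partial>lborel)"
    by (subst nn_integral_density) auto
  also have "\<dots> = (\<integral>\<^sup>+x. ennreal (exponential_density 1 (c + 1 * x)) * indicator {c..} (c + 1 * x) \<partial>lborel)"
    using nn_integral_real_affine[of "\<lambda>z. ennreal (exponential_density 1 z) * indicator {c..} z" 1 c]
    by simp
  also have "\<dots> = (\<integral>\<^sup>+x. ennreal (exp (- c)) * ennreal (exponential_density 1 x) \<partial>lborel)"
  proof (intro nn_integral_cong)
    fix x :: real
    show "ennreal (exponential_density 1 (c + 1 * x)) * indicator {c..} (c + 1 * x) =
      ennreal (exp (- c)) * ennreal (exponential_density 1 x)"
    proof (cases "x < 0")
      case False
      then have "exp (- (c + x)) = exp (- c) * exp (- x)" by (simp add: mult_exp_exp)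
      then show ?thesis using False c
        by (simp add: exponential_density_def indicator_def ennreal_mult[symmetric])
    qed (simp add: exponential_density_def indicator_def)
  qed
  also have "\<dots> = ennreal (exp (- c))"
    by (subst nn_integral_cmult) (auto simp: nn_integral_exponential_density)
  finally show ?thesis .
qed

lemma nn_integral_Exp1_laplace:
  assumes c: "0 \<le> c"
  shows "(\<integral>\<^sup>+y. ennreal (exp (- c * y)) \<partial>Exp1) = ennreal (1 / (1 + c))"
proof -
  have "(\<integral>\<^sup>+y. ennreal (exp (- c * y)) \<partial>Exp1)
      = (\<integral>\<^sup>+y. ennreal (exponential_density 1 y) * ennreal (exp (- c * y)) \<partial>lborel)"
    by (subst nn_integral_density) auto
  also have "\<dots> = (\<integral>\<^sup>+y. ennreal (1 / (1 + c)) * ennreal (exponential_density (1 + c) y) \<partial>lborel)"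
  proof (intro nn_integral_cong)
    fix y :: real
    show "ennreal (exponential_density 1 y) * ennreal (exp (- c * y)) =
       ennreal (1 / (1 + c)) * ennreal (exponential_density (1 + c) y)"
    proof (cases "y < 0")
      case False
      have "exp (- y) * exp (- c * y) = exp (- y * (1 + c))" by (simp add: mult_exp_exp algebra_simps)
      then show ?thesis using False c
        by (simp add: exponential_density_def ennreal_mult[symmetric])
    qed (simp add: exponential_density_def)
  qed
  also have "\<dots> = ennreal (1 / (1 + c))"
    using c by (subst nn_integral_cmult) (auto simp: nn_integral_exponential_density)
  finally show ?thesis .
qed

lemma prod_indicator_eq:
  "finite I \<Longrightarrow> (\<Prod>i\<in>I. (indicator (S i) (x i) :: ennreal)) = (if \<forall>i\<in>I. x i \<in> S i then 1 else 0)"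
  by (induction I rule: finite_induct) auto

definition first_clock_discount :: "real \<Rightarrow> ('a \<Rightarrow> real) \<Rightarrow> 'a set \<Rightarrow> 'a \<Rightarrow> ('a \<Rightarrow> real) \<Rightarrow> real" where
  "first_clock_discount \<theta> r A e x =
     (if \<forall>b\<in>A. x e / r e \<le> x b / r b then exp (- \<theta> * (x e / r e)) else 0)"

lemma first_clock_discount_nonneg: "0 \<le> first_clock_discount \<theta> r A e x"
  by (simp add: first_clock_discount_def)

lemma borel_measurable_first_clock_discount:
  assumes fin: "finite A" and e: "e \<in> A"
  shows "first_clock_discount \<theta> r A e \<in> borel_measurable (PiM A (\<lambda>_. Exp1))"
proof -
  let ?M = "PiM A (\<lambda>_. Exp1)"
  have clock: "(\<lambda>x. x b / r b) \<in> borel_measurable ?M" if "b \<in> A" for b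
    using that by (intro borel_measurable_divide borel_measurable_component_Exp1 borel_measurable_const)
  have "{x \<in> space ?M. \<forall>b\<in>A. x e / r e \<le> x b / r b}
      = space ?M \<inter> (\<Inter>b\<in>A. {x \<in> space ?M. x e / r e \<le> x b / r b})"
    by auto
  also have "\<dots> \<in> sets ?M"
    using fin e clock by (intro sets.Int sets.top sets.finite_INT borel_measurable_le) auto
  finally have "{x \<in> space ?M. \<forall>b\<in>A. x e / r e \<le> x b / r b} \<in> sets ?M" .
  moreover have "(\<lambda>x. exp (- \<theta> * (x e / r e))) \<in> borel_measurable ?M"
    using clock[OF e] by (intro measurable_compose[OF _ borel_measurable_exp] borel_measurable_times
        borel_measurable_const)
  ultimately show ?thesis
    unfolding first_clock_discount_def by (intro measurable_If borel_measurable_const)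
qed

lemma nn_integral_PiM_clocks_exceed:
  assumes A: "finite A" and r: "\<And>b. b \<in> A \<Longrightarrow> 0 \<le> r b" and y: "0 \<le> y"
  shows "(\<integral>\<^sup>+x. (\<Prod>b\<in>A. indicator {y * r b ..} (x b)) \<partial>PiM A (\<lambda>_. Exp1))
    = ennreal (exp (- y * sum r A))"
proof -
  interpret product_prob_space "\<lambda>_. Exp1" by (rule product_prob_space_Exp1)
  have "(\<integral>\<^sup>+x. (\<Prod>b\<in>A. indicator {y * r b ..} (x b)) \<partial>PiM A (\<lambda>_. Exp1))
      = (\<Prod>b\<in>A. (\<integral>\<^sup>+z. indicator {y * r b ..} z \<partial>Exp1))"
    by (rule product_nn_integral_prod[OF A]) simp
  also have "\<dots> = (\<Prod>b\<in>A. ennreal (exp (- (y * r b))))"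
    using r y by (intro prod.cong refl nn_integral_Exp1_tail) simp
  also have "\<dots> = ennreal (exp (- y * sum r A))"
    using A by (simp add: prod_ennreal exp_sum[symmetric] sum_distrib_left sum_negf)
  finally show ?thesis .
qed

lemma nn_integral_first_clock_discount_upd:
  assumes A: "finite A" "e \<notin> A" and rpos: "\<And>b. b \<in> insert e A \<Longrightarrow> 0 < r b" and y: "0 \<le> y"
  shows "(\<integral>\<^sup>+x. ennreal (first_clock_discount \<theta> r (insert e A) e (x(e := y))) \<partial>PiM A (\<lambda>_. Exp1))
    = ennreal (exp (- ((\<theta> + sum r A) / r e) * y))"
proof -
  have re: "0 < r e" using rpos by auto
  have rA: "0 \<le> r b / r e" if "b \<in> A" for b
    using rpos[of b] re that by simp
  have "first_clock_discount \<theta> r (insert e A) e (x(e := y))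
      = ennreal (exp (- \<theta> * (y / r e))) * (\<Prod>b\<in>A. indicator {y * (r b / r e) ..} (x b))" for x
  proof -
    have "y / r e \<le> x b / r b \<longleftrightarrow> x b \<in> {y * (r b / r e) ..}" if "b \<in> A" for b
      using rpos[of b] that re by (auto simp: field_simps)
    then have "(\<forall>b\<in>insert e A. (x(e := y)) e / r e \<le> (x(e := y)) b / r b)
        \<longleftrightarrow> (\<forall>b\<in>A. x b \<in> {y * (r b / r e) ..})"
      using A by auto
    then show ?thesis
      unfolding first_clock_discount_def
      using prod_indicator_eq[OF A(1), of "\<lambda>b. {y * (r b / r e) ..}" x] by simp
  qed
  then have "(\<integral>\<^sup>+x. ennreal (first_clock_discount \<theta> r (insert e A) e (x(e := y))) \<partial>PiM A (\<lambda>_. Exp1))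
      = ennreal (exp (- \<theta> * (y / r e)))
        * (\<integral>\<^sup>+x. (\<Prod>b\<in>A. indicator {y * (r b / r e) ..} (x b)) \<partial>PiM A (\<lambda>_. Exp1))"
    by (simp only:) (rule nn_integral_cmult, use A in measurable)
  also have "\<dots> = ennreal (exp (- \<theta> * (y / r e))) * ennreal (exp (- y * (\<Sum>b\<in>A. r b / r e)))"
    using nn_integral_PiM_clocks_exceed[OF A(1) rA y] by simp
  also have "\<dots> = ennreal (exp (- ((\<theta> + sum r A) / r e) * y))"
    by (simp add: ennreal_mult[symmetric] mult_exp_exp sum_divide_distrib[symmetric] field_simps
        add_divide_distrib)
  finally show ?thesis .
qed

lemma nn_integral_first_clock_discount:
  assumes fin: "finite A" and e: "e \<in> A" and rpos: "\<And>b. b \<in> A \<Longrightarrow> 0 < r b" and \<theta>: "0 \<le> \<theta>"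
  shows "(\<integral>\<^sup>+x. ennreal (first_clock_discount \<theta> r A e x) \<partial>PiM A (\<lambda>_. Exp1))
     = ennreal (r e / (sum r A + \<theta>))"
proof -
  interpret product_prob_space "\<lambda>_. Exp1" by (rule product_prob_space_Exp1)
  define A' where "A' = A - {e}"
  have A: "A = insert e A'" "e \<notin> A'" "finite A'" using e fin by (auto simp: A'_def)
  have re: "0 < r e" using rpos e by auto
  have meas: "(\<lambda>x. ennreal (first_clock_discount \<theta> r (insert e A') e x))
      \<in> borel_measurable (PiM (insert e A') (\<lambda>_. Exp1))"
    unfolding A(1)[symmetric]
    by (intro measurable_compose[OF _ measurable_ennreal] borel_measurable_first_clock_discount fin e)
  have "(\<integral>\<^sup>+x. ennreal (first_clock_discount \<theta> r A e x) \<partial>PiM A (\<lambda>_. Exp1))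
      = (\<integral>\<^sup>+y. (\<integral>\<^sup>+x. ennreal (first_clock_discount \<theta> r (insert e A') e (x(e := y))) \<partial>PiM A' (\<lambda>_. Exp1)) \<partial>Exp1)"
    unfolding A(1) by (rule product_nn_integral_insert_rev[OF A(3) A(2) meas])
  also have "\<dots> = (\<integral>\<^sup>+y. ennreal (exp (- ((\<theta> + sum r A') / r e) * y)) \<partial>Exp1)"
    using AE_Exp1_nonneg
    by (rule nn_integral_cong_AE[OF eventually_mono])
      (rule nn_integral_first_clock_discount_upd[OF A(3) A(2)], use rpos A in auto)
  also have "\<dots> = ennreal (1 / (1 + (\<theta> + sum r A') / r e))"
    using \<theta> re rpos A by (intro nn_integral_Exp1_laplace divide_nonneg_pos add_nonneg_nonneg sum_nonneg)
      (auto intro: less_imp_le)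
  also have "1 / (1 + (\<theta> + sum r A') / r e) = r e / (sum r A + \<theta>)"
    using re A by (simp add: field_simps)
  finally show ?thesis .
qed

lemma nn_integral_PiM_indep_blocks:
  fixes h1 h2 :: "('i \<Rightarrow> real) \<Rightarrow> real"
  assumes AB: "A \<inter> B = {}"
    and h1: "h1 \<in> borel_measurable (PiM A (\<lambda>_. Exp1))" "\<And>x. 0 \<le> h1 x"
    and h2: "h2 \<in> borel_measurable (PiM B (\<lambda>_. Exp1))" "\<And>x. 0 \<le> h2 x"
  shows "(\<integral>\<^sup>+\<omega>. ennreal (h1 (restrict \<omega> A) * h2 (restrict \<omega> B)) \<partial>PiM UNIV (\<lambda>_. Exp1))
    = (\<integral>\<^sup>+\<omega>. ennreal (h1 (restrict \<omega> A)) \<partial>PiM UNIV (\<lambda>_. Exp1))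
      * (\<integral>\<^sup>+\<omega>. ennreal (h2 (restrict \<omega> B)) \<partial>PiM UNIV (\<lambda>_. Exp1))"
proof -
  let ?P = "PiM UNIV (\<lambda>_::'i. Exp1)"
  interpret P: prob_space ?P by (rule prob_space_PiM) (rule prob_space_Exp1)
  have rv: "\<And>i. (\<lambda>\<omega>. \<omega> i) \<in> measurable ?P Exp1" by (rule measurable_component_singleton) simp
  have "distr ?P (PiM UNIV (\<lambda>i. Exp1)) (\<lambda>x. \<lambda>i\<in>UNIV. x i) = PiM UNIV (\<lambda>i. distr ?P Exp1 (\<lambda>\<omega>. \<omega> i))"
  proof -
    have "PiM UNIV (\<lambda>i. distr ?P Exp1 (\<lambda>\<omega>. \<omega> i)) = ?P"
      by (intro PiM_cong refl distr_PiM_component prob_space_Exp1) simp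
    then show ?thesis by (simp add: restrict_UNIV)
  qed
  then have "P.indep_vars (\<lambda>_. Exp1) (\<lambda>i \<omega>. \<omega> i) UNIV"
    by (rule P.indep_vars_iff_distr_eq_PiM[THEN iffD2, OF _ rv, rotated]) simp
  then have "P.indep_var (PiM A (\<lambda>_. Exp1)) (\<lambda>\<omega>. restrict (\<lambda>i. \<omega> i) A)
      (PiM B (\<lambda>_. Exp1)) (\<lambda>\<omega>. restrict (\<lambda>i. \<omega> i) B)"
    by (rule P.indep_var_restrict[OF _ AB]) auto
  then have "P.indep_var borel ((\<lambda>x. ennreal (h1 x)) \<circ> (\<lambda>\<omega>. restrict \<omega> A))
      borel ((\<lambda>x. ennreal (h2 x)) \<circ> (\<lambda>\<omega>. restrict \<omega> B))"
    by (rule P.indep_var_compose) (use h1 h2 in measurable)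
  then have "P.indep_vars (\<lambda>_. borel)
      (case_bool ((\<lambda>x. ennreal (h1 x)) \<circ> (\<lambda>\<omega>. restrict \<omega> A)) ((\<lambda>x. ennreal (h2 x)) \<circ> (\<lambda>\<omega>. restrict \<omega> B)))
      UNIV"
    unfolding P.indep_var_def by (rule back_subst[where P = "\<lambda>M. P.indep_vars M _ UNIV"])
      (simp add: fun_eq_iff split: bool.split)
  from P.indep_vars_nn_integral[OF _ this]
  have "(\<integral>\<^sup>+\<omega>. ennreal (h1 (restrict \<omega> A)) * ennreal (h2 (restrict \<omega> B)) \<partial>?P)
      = (\<integral>\<^sup>+\<omega>. ennreal (h1 (restrict \<omega> A)) \<partial>?P) * (\<integral>\<^sup>+\<omega>. ennreal (h2 (restrict \<omega> B)) \<partial>?P)"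
    by (simp add: UNIV_bool mult.commute comp_def)
  then show ?thesis by (simp add: ennreal_mult h1(2) h2(2))
qed


definition discount :: "real \<Rightarrow> ereal \<Rightarrow> ennreal" where
  "discount \<theta> \<tau> = (case \<tau> of ereal r \<Rightarrow> ennreal (exp (- \<theta> * r)) | _ \<Rightarrow> 0)"

lemma discount_add_le: "discount \<theta> (a + b) \<le> discount \<theta> a * discount \<theta> b"
proof (cases a; cases b)
  fix r s assume ab: "a = ereal r" "b = ereal s"
  have "exp (- \<theta> * (r + s)) = exp (- \<theta> * r) * exp (- \<theta> * s)"
    by (simp add: mult_exp_exp ring_distribs)
  then show ?thesis using ab by (simp add: discount_def ennreal_mult)
qed (simp_all add: discount_def)

lemma indicator_atMost_le_discount:
  assumes "\<tau> \<noteq> - \<infinity>" "0 \<le> \<theta>"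
  shows "indicator {..ereal t} \<tau> \<le> ennreal (exp (\<theta> * t)) * discount \<theta> \<tau>"
proof (cases "\<tau> \<le> ereal t")
  case True
  with assms obtain r where r: "\<tau> = ereal r" "r \<le> t" by (cases \<tau>) auto
  have "1 \<le> exp (\<theta> * (t - r))" using r assms by simp
  also have "exp (\<theta> * (t - r)) = exp (\<theta> * t) * exp (- \<theta> * r)"
    by (simp add: mult_exp_exp algebra_simps)
  finally show ?thesis using r by (simp add: discount_def ennreal_mult[symmetric] ennreal_leI)
qed simp


section \<open>Mass and jump rates\<close>

locale ips_graph =
  fixes V V0 :: "'h::{real_inner, complete_space} set" and E :: "'h set set"
    and k :: "'h \<Rightarrow> 'h \<Rightarrow> real" and m :: "'h \<Rightarrow> real" and D :: nat and M :: real
  assumes E_edges: "E \<subseteq> {{x, y} | x y. x \<in> V \<and> y \<in> V \<and> x \<noteq> y}"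
    and k_nonneg: "\<And>x y. 0 \<le> k x y"
    and m_pos: "\<And>x. x \<in> V \<Longrightarrow> 0 < m x"
    and degree_le: "\<And>x. x \<in> V \<Longrightarrow> finite {y. {x, y} \<in> E} \<and> card {y. {x, y} \<in> E} \<le> D"
    and inverse_m_le: "\<And>x. x \<in> V \<Longrightarrow> 1 / m x \<le> M"
    and k_le: "\<And>x y. {x, y} \<in> E \<Longrightarrow> k x y \<le> M"
    and M_pos: "0 < M"
    and V0_subset: "V0 \<subseteq> V"
begin

definition admissible :: "'h state \<Rightarrow> bool" where
  "admissible g \<longleftrightarrow> finite {x. fst g x \<noteq> 0} \<and> finite {e. snd g e \<noteq> 0}
     \<and> (\<forall>x. x \<notin> V \<longrightarrow> fst g x = 0) \<and> (\<forall>e. e \<notin> E \<longrightarrow> snd g e = 0)"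

definition mass :: "'h state \<Rightarrow> real" where
  "mass g = (\<Sum>x\<in>{x. fst g x \<noteq> 0}. \<bar>fst g x\<bar>) + (\<Sum>e\<in>{e. snd g e \<noteq> 0}. norm (snd g e))"

definition active :: "'h state \<Rightarrow> 'h event set" where
  "active g = {evt. 0 < rate m k g evt}"

definition total_rate :: "'h state \<Rightarrow> real" where
  "total_rate g = (\<Sum>evt\<in>active g. rate m k g evt)"

lemma F0_admissible: "f \<in> F0 V E \<Longrightarrow> admissible f"
  by (cases f) (auto simp: F0_def admissible_def)

lemma edge_doubleton: "e \<in> E \<Longrightarrow> \<exists>x y. e = {x, y} \<and> x \<in> V \<and> y \<in> V \<and> x \<noteq> y"
  using E_edges by blast

lemma edge_weight_bounds:
  assumes "e \<in> E"
  shows "0 \<le> edge_weight k e" "edge_weight k e \<le> M"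
proof -
  obtain x y where e: "e = {x, y}" "x \<noteq> y" using edge_doubleton[OF assms] by blast
  have "{y, x} \<in> E" using assms e by (simp add: insert_commute)
  then show "0 \<le> edge_weight k e" "edge_weight k e \<le> M"
    using edge_weight_doubleton[OF e(2), of k] e assms k_nonneg k_le by auto
qed

lemma mass_nonneg: "0 \<le> mass g"
  unfolding mass_def by (intro add_nonneg_nonneg sum_nonneg) auto

lemma active_subset: "active g \<subseteq> Inl ` {x. fst g x \<noteq> 0} \<union> Inr ` {e. snd g e \<noteq> 0}"
proof
  fix evt assume "evt \<in> active g"
  then show "evt \<in> Inl ` {x. fst g x \<noteq> 0} \<union> Inr ` {e. snd g e \<noteq> 0}"
    by (cases evt) (auto simp: active_def rate_def)
qed

lemma finite_active: "admissible g \<Longrightarrow> finite (active g)"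
  by (rule finite_subset[OF active_subset]) (auto simp: admissible_def)

lemma rate_pos: "evt \<in> active g \<Longrightarrow> 0 < rate m k g evt"
  by (simp add: active_def)

lemma total_rate_nonneg: "0 \<le> total_rate g"
  unfolding total_rate_def by (intro sum_nonneg) (auto dest: rate_pos)

lemma rate_le_mass_rate:
  assumes g: "admissible g" and evt: "evt \<in> active g"
  shows "rate m k g evt \<le> (case evt of Inl x \<Rightarrow> M * \<bar>fst g x\<bar> | Inr e \<Rightarrow> M * norm (snd g e))"
proof (cases evt)
  case (Inl x)
  then have "x \<in> V" using g rate_pos[OF evt] by (auto simp: admissible_def rate_def)
  then have "0 < m x" "1 / m x \<le> M" using m_pos inverse_m_le by auto
  then have "\<bar>fst g x\<bar> * (1 / m x) \<le> \<bar>fst g x\<bar> * M" by (intro mult_left_mono) auto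
  then show ?thesis using Inl by (simp add: rate_def mult.commute)
next
  case (Inr e)
  then have "e \<in> E" using g rate_pos[OF evt] by (auto simp: admissible_def rate_def)
  then have "edge_weight k e * norm (snd g e) \<le> M * norm (snd g e)"
    using edge_weight_bounds by (intro mult_right_mono) auto
  then show ?thesis using Inr by (simp add: rate_def)
qed

lemma total_rate_le: assumes g: "admissible g" shows "total_rate g \<le> M * mass g"
proof -
  define bnd where "bnd evt = (case evt of Inl x \<Rightarrow> M * \<bar>fst g x\<bar> | Inr e \<Rightarrow> M * norm (snd g e))" for evt
  let ?Sa = "{x. fst g x \<noteq> 0}" and ?Sb = "{e. snd g e \<noteq> 0}"
  have fin: "finite ?Sa" "finite ?Sb" using g by (auto simp: admissible_def)
  have "total_rate g \<le> (\<Sum>evt\<in>active g. bnd evt)"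
    unfolding total_rate_def bnd_def by (intro sum_mono rate_le_mass_rate g)
  also have "\<dots> \<le> (\<Sum>evt\<in>Inl ` ?Sa \<union> Inr ` ?Sb. bnd evt)"
    using active_subset fin M_pos by (intro sum_mono2) (auto simp: bnd_def split: sum.split)
  also have "\<dots> = (\<Sum>evt\<in>Inl ` ?Sa. bnd evt) + (\<Sum>evt\<in>Inr ` ?Sb. bnd evt)"
    using fin by (intro sum.union_disjoint) auto
  also have "\<dots> = M * mass g"
    by (simp add: sum.reindex bnd_def mass_def sum_distrib_left distrib_left)
  finally show ?thesis .
qed

lemma incident_edges:
  assumes "x \<in> V"
  shows "finite {e\<in>E. x \<in> e}" "card {e\<in>E. x \<in> e} \<le> D"
proof -
  have sub: "{e\<in>E. x \<in> e} \<subseteq> (\<lambda>y. {x, y}) ` {y. {x, y} \<in> E}"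
  proof
    fix e assume e: "e \<in> {e\<in>E. x \<in> e}"
    then obtain u v where "e = {u, v}" using edge_doubleton by blast
    with e show "e \<in> (\<lambda>y. {x, y}) ` {y. {x, y} \<in> E}" by (auto simp: insert_commute)
  qed
  then show "finite {e\<in>E. x \<in> e}" using degree_le[OF assms] by (auto intro: finite_subset)
  have "card {e\<in>E. x \<in> e} \<le> card ((\<lambda>y. {x, y}) ` {y. {x, y} \<in> E})"
    using degree_le[OF assms] by (intro card_mono[OF _ sub]) auto
  also have "\<dots> \<le> card {y. {x, y} \<in> E}" by (rule card_image_le) (use degree_le[OF assms] in auto)
  finally show "card {e\<in>E. x \<in> e} \<le> D" using degree_le[OF assms] by linarith
qed

lemma node_jump_admissible_mass:
  assumes g: "admissible g" and x: "x \<in> V"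
  shows "admissible (node_jump E g x)" "mass (node_jump E g x) \<le> mass g + D"
proof -
  define b where "b e = snd (node_jump E g x) e" for e
  have bound: "norm (b e) \<le> norm (snd g e) + (if e \<in> {e\<in>E. x \<in> e} then 1 else 0)" for e
  proof (cases "e \<in> E \<and> x \<in> e")
    case True
    let ?u = "(x - other e x) /\<^sub>R norm (x - other e x)"
    have "norm ?u \<le> 1" by (metis norm_sgn order_refl sgn_div_norm zero_less_one order_less_imp_le)
    have "norm (sgn (fst g x) *\<^sub>R ?u) = \<bar>sgn (fst g x)\<bar> * norm ?u" by (rule norm_scaleR)
    also have "\<dots> \<le> 1 * 1" using \<open>norm ?u \<le> 1\<close> by (intro mult_mono) (auto simp: abs_sgn_eq)
    finally show ?thesis using True norm_triangle_ineq[of "snd g e" "sgn (fst g x) *\<^sub>R ?u"]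
      by (simp add: b_def node_jump_def)
  qed (auto simp: b_def node_jump_def)
  have fin: "finite {e. snd g e \<noteq> 0}" using g by (simp add: admissible_def)
  note perturb = sum_norm_perturbation_le[OF fin incident_edges(1)[OF x] bound]
  show "admissible (node_jump E g x)"
    using g perturb(1) by (auto simp: admissible_def b_def node_jump_def)
  show "mass (node_jump E g x) \<le> mass g + D"
    using perturb(2) incident_edges(2)[OF x] by (simp add: mass_def b_def node_jump_def)
qed

lemma edge_jump_admissible_mass:
  assumes g: "admissible g" and e: "e \<in> E"
  shows "admissible (edge_jump V0 g e)" "mass (edge_jump V0 g e) \<le> mass g + 2"
proof -
  obtain u v where uv: "e = {u, v}" using edge_doubleton[OF e] by blast
  define a where "a z = fst (edge_jump V0 g e) z" for z
  have bound: "norm (a z) \<le> norm (fst g z) + (if z \<in> e then 1 else 0)" for z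
    by (auto simp: a_def edge_jump_def sgn_real_def)
  have fin: "finite {z. fst g z \<noteq> 0}" using g by (simp add: admissible_def)
  note perturb = sum_norm_perturbation_le[OF fin _ bound]
  show "admissible (edge_jump V0 g e)"
    using g perturb(1) uv V0_subset by (auto simp: admissible_def a_def edge_jump_def)
  have "card e \<le> 2" using uv by (simp add: card_insert_le_m1)
  then show "mass (edge_jump V0 g e) \<le> mass g + 2"
    using perturb(2) uv by (simp add: mass_def a_def edge_jump_def)
qed

lemma jump_admissible_mass:
  assumes g: "admissible g" and evt: "evt \<in> active g"
  shows "admissible (jump V0 E g evt) \<and> mass (jump V0 E g evt) \<le> mass g + real (D + 2)"
proof (cases evt)
  case (Inl x)
  then have "x \<in> V" using g rate_pos[OF evt] by (auto simp: admissible_def rate_def)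
  then show ?thesis using node_jump_admissible_mass[OF g \<open>x \<in> V\<close>] Inl by (simp add: jump_def)
next
  case (Inr e)
  then have "e \<in> E" using g rate_pos[OF evt] by (auto simp: admissible_def rate_def)
  then show ?thesis using edge_jump_admissible_mass[OF g \<open>e \<in> E\<close>] Inr by (simp add: jump_def)
qed

lemma normpow_le_mass:
  assumes g: "admissible g" and \<alpha>: "1 \<le> \<alpha>"
  shows "normpow V E m k \<alpha> g \<le> M * (mass g + 1) powr \<alpha>"
proof -
  let ?Q = "(mass g + 1) powr (\<alpha> - 1)"
  let ?Sa = "{x. fst g x \<noteq> 0}" and ?Sb = "{e. snd g e \<noteq> 0}"
  have fin: "finite ?Sa" "finite ?Sb" using g by (auto simp: admissible_def)
  have supp: "{x \<in> V. fst g x \<noteq> 0} = ?Sa" "{e \<in> E. snd g e \<noteq> 0} = ?Sb"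
    using g by (auto simp: admissible_def)
  have node_le: "\<bar>fst g x\<bar> \<le> mass g" if "x \<in> ?Sa" for x
    using member_le_sum[of x ?Sa "\<lambda>x. \<bar>fst g x\<bar>"] fin that
    by (simp add: mass_def add_increasing2 sum_nonneg)
  have edge_le: "norm (snd g e) \<le> mass g" if "e \<in> ?Sb" for e
    using member_le_sum[of e ?Sb "\<lambda>e. norm (snd g e)"] fin that
    by (simp add: mass_def add_increasing sum_nonneg)
  have "(\<Sum>x\<in>?Sa. \<bar>fst g x\<bar> powr \<alpha> / m x) \<le> (\<Sum>x\<in>?Sa. M * ?Q * \<bar>fst g x\<bar>)"
  proof (rule sum_mono)
    fix x assume x: "x \<in> ?Sa"
    then have "0 < m x" "1 / m x \<le> M" using g m_pos inverse_m_le by (auto simp: admissible_def)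
    moreover have "\<bar>fst g x\<bar> powr \<alpha> \<le> \<bar>fst g x\<bar> * ?Q"
      using x node_le[OF x] \<alpha> by (intro powr_le_mult_powr) auto
    ultimately have "\<bar>fst g x\<bar> powr \<alpha> * (1 / m x) \<le> (\<bar>fst g x\<bar> * ?Q) * M"
      by (intro mult_mono) auto
    then show "\<bar>fst g x\<bar> powr \<alpha> / m x \<le> M * ?Q * \<bar>fst g x\<bar>" by (simp add: algebra_simps)
  qed
  moreover have "(\<Sum>e\<in>?Sb. edge_weight k e * norm (snd g e) powr \<alpha>) \<le> (\<Sum>e\<in>?Sb. M * ?Q * norm (snd g e))"
  proof (rule sum_mono)
    fix e assume e: "e \<in> ?Sb"
    then have "0 \<le> edge_weight k e" "edge_weight k e \<le> M"
      using g edge_weight_bounds by (auto simp: admissible_def)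
    moreover have "norm (snd g e) powr \<alpha> \<le> norm (snd g e) * ?Q"
      using e edge_le[OF e] \<alpha> by (intro powr_le_mult_powr) auto
    ultimately have "edge_weight k e * norm (snd g e) powr \<alpha> \<le> M * (norm (snd g e) * ?Q)"
      by (intro mult_mono) auto
    then show "edge_weight k e * norm (snd g e) powr \<alpha> \<le> M * ?Q * norm (snd g e)"
      by (simp add: algebra_simps)
  qed
  ultimately have "normpow V E m k \<alpha> g \<le> M * ?Q * mass g"
    unfolding normpow_def supp by (simp add: mass_def sum_distrib_left distrib_left)
  also have "\<dots> \<le> M * ?Q * (mass g + 1)" using M_pos by (intro mult_left_mono) auto
  also have "\<dots> = M * (mass g + 1) powr \<alpha>"
    using mass_nonneg[of g] powr_add[of "mass g + 1" "\<alpha> - 1" 1] by simp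
  finally show ?thesis .
qed

section \<open>Laplace transform of the jump times\<close>

text \<open>Unlike \<open>jchain\<close>, which appends steps at the end, this recursion peels off the first
  step and shifts the clock index, as the step-by-step independence argument requires.\<close>
primrec chain_from :: "nat \<Rightarrow> 'h state \<Rightarrow> (nat \<times> 'h event \<Rightarrow> real) \<Rightarrow> nat \<Rightarrow> 'h state \<times> ereal" where
  "chain_from j g \<omega> 0 = (g, 0)"
| "chain_from j g \<omega> (Suc n) =
     (let (g1, \<xi>) = step m k V0 E g (\<lambda>evt. \<omega> (j, evt)); (g2, \<tau>) = chain_from (Suc j) g1 \<omega> n
      in (g2, \<xi> + \<tau>))"

lemma chain_from_Suc_last:
  "chain_from j g \<omega> (Suc n) =
     (let (g1, \<tau>) = chain_from j g \<omega> n; (g2, \<xi>) = step m k V0 E g1 (\<lambda>evt. \<omega> (j + n, evt))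
      in (g2, \<tau> + \<xi>))"
proof (induction n arbitrary: j g)
  case (Suc n)
  show ?case
    by (subst chain_from.simps(2), subst Suc.IH) (simp add: split_def Let_def add.assoc)
qed (simp add: split_def Let_def)

lemma jchain_eq_chain_from: "jchain m k V0 E f \<omega> n = chain_from 0 f \<omega> n"
proof (induction n)
  case (Suc n)
  then show ?case
    by (subst chain_from_Suc_last) (simp add: split_def Let_def del: chain_from.simps)
qed simp

lemma step_eq:
  "step m k V0 E g c = (if active g = {} then (g, \<infinity>) else
     let evt = arg_min_on (\<lambda>evt. c evt / rate m k g evt) (active g)
     in (jump V0 E g evt, ereal (c evt / rate m k g evt)))"
  by (simp add: step_def active_def Let_def)

lemma arg_min_on_active:
  assumes "admissible g" "active g \<noteq> {}"
  shows "arg_min_on f (active g) \<in> active g"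
    and "\<And>b. b \<in> active g \<Longrightarrow> f (arg_min_on f (active g)) \<le> (f b :: real)"
  using arg_min_if_finite[OF finite_active[OF assms(1)] assms(2), of f] by (auto simp: not_less)

lemma chain_from_admissible_mass:
  "admissible g \<Longrightarrow> admissible (fst (chain_from j g \<omega> n))
     \<and> mass (fst (chain_from j g \<omega> n)) \<le> mass g + real n * real (D + 2)"
proof (induction n arbitrary: j g)
  case (Suc n)
  show ?case
  proof (cases "active g = {}")
    case True
    then have "fst (chain_from j g \<omega> (Suc n)) = fst (chain_from (Suc j) g \<omega> n)"
      by (simp add: step_eq split_def)
    then show ?thesis using Suc.IH[OF Suc.prems, of "Suc j"] by (simp add: algebra_simps)
  next
    case False
    define a where "a = arg_min_on (\<lambda>evt. \<omega> (j, evt) / rate m k g evt) (active g)"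
    have a: "a \<in> active g" unfolding a_def by (rule arg_min_on_active[OF Suc.prems False])
    have "fst (chain_from j g \<omega> (Suc n)) = fst (chain_from (Suc j) (jump V0 E g a) \<omega> n)"
      using False by (simp add: step_eq split_def Let_def a_def)
    then show ?thesis using Suc.IH[of "jump V0 E g a" "Suc j"] jump_admissible_mass[OF Suc.prems a]
      by (simp add: algebra_simps)
  qed
qed simp

lemma chain_from_time_not_minf: "snd (chain_from j g \<omega> n) \<noteq> - \<infinity>"
proof (induction n arbitrary: j g)
  case (Suc n)
  have IH: "snd (chain_from (Suc j) g' \<omega> n) \<noteq> - \<infinity>" for g' by (rule Suc.IH)
  show ?case
  proof (cases "active g = {}")
    case True
    then have "snd (chain_from j g \<omega> (Suc n)) = \<infinity> + snd (chain_from (Suc j) g \<omega> n)"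
      by (simp add: step_eq split_def)
    then show ?thesis using IH[of g] by (cases "snd (chain_from (Suc j) g \<omega> n)") auto
  next
    case False
    then obtain r g' where "snd (chain_from j g \<omega> (Suc n)) = ereal r + snd (chain_from (Suc j) g' \<omega> n)"
      by (simp add: step_eq split_def Let_def)
    then show ?thesis using IH[of g'] by (cases "snd (chain_from (Suc j) g' \<omega> n)") auto
  qed
qed simp

text \<open>\<open>discount_majorant \<theta> j g \<omega> n\<close> sums, over all sequences of \<open>n\<close> transitions from \<open>g\<close>, the
  product of the discounted indicators that each transition fires first at its step. Only the
  path actually taken contributes, so it dominates \<open>exp (-\<theta> \<tau>\<^sub>n)\<close>; unlike the latter, each
  summand factorizes over the independent clocks of the individual steps.\<close>
primrec discount_majorant :: "real \<Rightarrow> nat \<Rightarrow> 'h state \<Rightarrow> (nat \<times> 'h event \<Rightarrow> real) \<Rightarrow> nat \<Rightarrow> real"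
where
  "discount_majorant \<theta> j g \<omega> 0 = 1"
| "discount_majorant \<theta> j g \<omega> (Suc n) =
     (\<Sum>evt\<in>active g. first_clock_discount \<theta> (rate m k g) (active g) evt (\<lambda>e. \<omega> (j, e))
        * discount_majorant \<theta> (Suc j) (jump V0 E g evt) \<omega> n)"

lemma discount_majorant_nonneg: "0 \<le> discount_majorant \<theta> j g \<omega> n"
  by (induction n arbitrary: j g)
    (simp_all add: sum_nonneg mult_nonneg_nonneg first_clock_discount_nonneg)

lemma discount_chain_from_le:
  "admissible g \<Longrightarrow> discount \<theta> (snd (chain_from j g \<omega> n)) \<le> ennreal (discount_majorant \<theta> j g \<omega> n)"
proof (induction n arbitrary: j g)
  case (Suc n)
  show ?case
  proof (cases "active g = {}")
    case True
    then show ?thesis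
      using discount_add_le[of \<theta> \<infinity> "snd (chain_from (Suc j) g \<omega> n)"]
      by (simp add: step_eq split_def discount_def)
  next
    case False
    define c where "c = (\<lambda>evt. \<omega> (j, evt))"
    define a where "a = arg_min_on (\<lambda>evt. c evt / rate m k g evt) (active g)"
    let ?g' = "jump V0 E g a"
    have a: "a \<in> active g" unfolding a_def by (rule arg_min_on_active[OF Suc.prems False])
    have first: "first_clock_discount \<theta> (rate m k g) (active g) a c = exp (- \<theta> * (c a / rate m k g a))"
      using arg_min_on_active(2)[OF Suc.prems False, where f = "\<lambda>evt. c evt / rate m k g evt"]
      by (auto simp: first_clock_discount_def a_def)
    have "snd (chain_from j g \<omega> (Suc n)) = ereal (c a / rate m k g a) + snd (chain_from (Suc j) ?g' \<omega> n)"
      using False by (simp add: step_eq split_def Let_def a_def c_def)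
    then have "discount \<theta> (snd (chain_from j g \<omega> (Suc n)))
        \<le> discount \<theta> (ereal (c a / rate m k g a)) * discount \<theta> (snd (chain_from (Suc j) ?g' \<omega> n))"
      by (simp only: discount_add_le)
    also have "\<dots> \<le> ennreal (first_clock_discount \<theta> (rate m k g) (active g) a c)
        * ennreal (discount_majorant \<theta> (Suc j) ?g' \<omega> n)"
      using Suc.IH[of ?g' "Suc j"] jump_admissible_mass[OF Suc.prems a]
      by (simp add: discount_def first mult_left_mono)
    also have "\<dots> \<le> ennreal (discount_majorant \<theta> j g \<omega> (Suc n))"
      unfolding discount_majorant.simps c_def[symmetric] ennreal_mult'[OF first_clock_discount_nonneg, symmetric]
      using finite_active[OF Suc.prems] a
      by (intro ennreal_leI member_le_sum[where f = "\<lambda>evt. first_clock_discount \<theta> (rate m k g) (active g) evt c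
          * discount_majorant \<theta> (Suc j) (jump V0 E g evt) \<omega> n"])
        (auto intro!: mult_nonneg_nonneg first_clock_discount_nonneg discount_majorant_nonneg)
    finally show ?thesis .
  qed
qed (simp add: discount_def zero_ereal_def)

lemma first_clock_discount_restrict:
  "e \<in> A \<Longrightarrow> first_clock_discount \<theta> r A e (restrict x A) = first_clock_discount \<theta> r A e x"
  by (simp add: first_clock_discount_def)

lemma borel_measurable_first_clock_discount_step:
  assumes g: "admissible g" and evt: "evt \<in> active g" and B: "\<And>e. (j, e) \<in> B"
  shows "(\<lambda>x. first_clock_discount \<theta> (rate m k g) (active g) evt (\<lambda>e. x (j, e)))
    \<in> borel_measurable (PiM B (\<lambda>_. Exp1))"
proof -
  have "(\<lambda>x. \<lambda>e\<in>active g. x (j, e)) \<in> measurable (PiM B (\<lambda>_. Exp1)) (PiM (active g) (\<lambda>_. Exp1))"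
    by (intro measurable_restrict measurable_component_singleton B)
  from measurable_compose[OF this borel_measurable_first_clock_discount[OF finite_active[OF g] evt]]
  show ?thesis using evt by (simp add: first_clock_discount_restrict comp_def)
qed

lemma borel_measurable_discount_majorant:
  "admissible g \<Longrightarrow> {p. j \<le> fst p} \<subseteq> B
    \<Longrightarrow> (\<lambda>x. discount_majorant \<theta> j g x n) \<in> borel_measurable (PiM B (\<lambda>_. Exp1))"
proof (induction n arbitrary: j g)
  case (Suc n)
  have "(\<lambda>x. first_clock_discount \<theta> (rate m k g) (active g) evt (\<lambda>e. x (j, e))
      * discount_majorant \<theta> (Suc j) (jump V0 E g evt) x n) \<in> borel_measurable (PiM B (\<lambda>_. Exp1))"
    if evt: "evt \<in> active g" for evt
    using Suc.prems jump_admissible_mass[OF Suc.prems(1) evt]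
    by (intro borel_measurable_times borel_measurable_first_clock_discount_step[OF Suc.prems(1) evt]
        Suc.IH) auto
  then show ?case by (simp only: discount_majorant.simps) (rule borel_measurable_sum)
qed simp

lemma discount_majorant_cong:
  "(\<And>i e. j \<le> i \<Longrightarrow> x (i, e) = y (i, e)) \<Longrightarrow> discount_majorant \<theta> j g x n = discount_majorant \<theta> j g y n"
proof (induction n arbitrary: j g)
  case (Suc n)
  have "(\<lambda>e. x (j, e)) = (\<lambda>e. y (j, e))" using Suc.prems by auto
  moreover have "discount_majorant \<theta> (Suc j) g' x n = discount_majorant \<theta> (Suc j) g' y n" for g'
    using Suc.prems by (intro Suc.IH) auto
  ultimately show ?case by simp
qed simp

lemma nn_integral_first_clock_discount_step:
  assumes g: "admissible g" and evt: "evt \<in> active g" and \<theta>: "0 \<le> \<theta>"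
  shows "(\<integral>\<^sup>+\<omega>. ennreal (first_clock_discount \<theta> (rate m k g) (active g) evt (\<lambda>e. \<omega> (j, e))) \<partial>clock_space)
    = ennreal (rate m k g evt / (total_rate g + \<theta>))"
proof -
  let ?H = "\<lambda>x. ennreal (first_clock_discount \<theta> (rate m k g) (active g) evt x)"
  let ?R = "\<lambda>\<omega>. \<lambda>e\<in>active g. \<omega> (j, e)"
  have R: "?R \<in> measurable clock_space (PiM (active g) (\<lambda>_. Exp1))"
    unfolding clock_space_def by (intro measurable_restrict measurable_component_singleton) simp
  have distr: "distr clock_space (PiM (active g) (\<lambda>_. Exp1)) ?R = PiM (active g) (\<lambda>_. Exp1)"
    unfolding clock_space_def
    using distr_PiM_reindex[of UNIV "\<lambda>_. Exp1" "\<lambda>e. (j, e)" "active g"] prob_space_Exp1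
    by (simp add: inj_on_def)
  have "(\<integral>\<^sup>+\<omega>. ennreal (first_clock_discount \<theta> (rate m k g) (active g) evt (\<lambda>e. \<omega> (j, e))) \<partial>clock_space)
      = (\<integral>\<^sup>+\<omega>. ?H (?R \<omega>) \<partial>clock_space)"
    using evt by (simp add: first_clock_discount_restrict)
  also have "\<dots> = (\<integral>\<^sup>+x. ?H x \<partial>PiM (active g) (\<lambda>_. Exp1))"
    using nn_integral_distr[OF R, of ?H] borel_measurable_first_clock_discount[OF finite_active[OF g] evt]
    by (simp add: distr measurable_compose[OF _ measurable_ennreal])
  also have "\<dots> = ennreal (rate m k g evt / (total_rate g + \<theta>))"
    unfolding total_rate_def
    using g evt \<theta> by (intro nn_integral_first_clock_discount finite_active) (auto simp: active_def)
  finally show ?thesis .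
qed

lemma nn_integral_first_clock_discount_times_majorant:
  assumes g: "admissible g" and evt: "evt \<in> active g" and g': "admissible g'" and \<theta>: "0 \<le> \<theta>"
  shows "(\<integral>\<^sup>+\<omega>. ennreal (first_clock_discount \<theta> (rate m k g) (active g) evt (\<lambda>e. \<omega> (j, e))
            * discount_majorant \<theta> (Suc j) g' \<omega> n) \<partial>clock_space)
    = ennreal (rate m k g evt / (total_rate g + \<theta>))
      * (\<integral>\<^sup>+\<omega>. ennreal (discount_majorant \<theta> (Suc j) g' \<omega> n) \<partial>clock_space)"
proof -
  define A where "A = {p :: nat \<times> 'h event. fst p = j}"
  define B where "B = {p :: nat \<times> 'h event. Suc j \<le> fst p}"
  let ?h1 = "\<lambda>x. first_clock_discount \<theta> (rate m k g) (active g) evt (\<lambda>e. x (j, e))"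
  let ?h2 = "\<lambda>x. discount_majorant \<theta> (Suc j) g' x n"
  have h1: "?h1 (restrict \<omega> A) = ?h1 \<omega>" for \<omega> by (simp add: A_def)
  have h2: "?h2 (restrict \<omega> B) = ?h2 \<omega>" for \<omega> by (rule discount_majorant_cong) (simp add: B_def)
  have "(\<integral>\<^sup>+\<omega>. ennreal (?h1 \<omega> * ?h2 \<omega>) \<partial>clock_space)
      = (\<integral>\<^sup>+\<omega>. ennreal (?h1 (restrict \<omega> A) * ?h2 (restrict \<omega> B)) \<partial>clock_space)"
    by (simp only: h1 h2)
  also have "\<dots> = (\<integral>\<^sup>+\<omega>. ennreal (?h1 (restrict \<omega> A)) \<partial>clock_space)
      * (\<integral>\<^sup>+\<omega>. ennreal (?h2 (restrict \<omega> B)) \<partial>clock_space)"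
    unfolding clock_space_def
    by (rule nn_integral_PiM_indep_blocks)
      (auto simp: A_def B_def first_clock_discount_nonneg discount_majorant_nonneg
        intro: borel_measurable_first_clock_discount_step[OF g evt] borel_measurable_discount_majorant[OF g'])
  finally show ?thesis
    by (simp only: h1 h2 nn_integral_first_clock_discount_step[OF g evt \<theta>])
qed

definition discount_bound :: "real \<Rightarrow> nat \<Rightarrow> real \<Rightarrow> real" where
  "discount_bound \<theta> n s =
     (\<Prod>i<n. M * (s + real i * real (D + 2)) / (M * (s + real i * real (D + 2)) + \<theta>))"

lemma discount_bound_Suc:
  "discount_bound \<theta> (Suc n) s = M * s / (M * s + \<theta>) * discount_bound \<theta> n (s + real (D + 2))"
  unfolding discount_bound_def prod.lessThan_Suc_shift by (simp add: algebra_simps)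

lemma discount_bound_nonneg: "0 < \<theta> \<Longrightarrow> 0 \<le> s \<Longrightarrow> 0 \<le> discount_bound \<theta> n s"
  unfolding discount_bound_def using M_pos by (intro prod_nonneg) simp

lemma discount_bound_mono: "0 < \<theta> \<Longrightarrow> 0 \<le> s \<Longrightarrow> s \<le> s' \<Longrightarrow> discount_bound \<theta> n s \<le> discount_bound \<theta> n s'"
  unfolding discount_bound_def using M_pos
  by (intro prod_mono conjI divide_self_add_mono mult_left_mono add_right_mono) simp_all

lemma nn_integral_discount_majorant_Suc:
  assumes g: "admissible g" and \<theta>: "0 \<le> \<theta>"
  shows "(\<integral>\<^sup>+\<omega>. ennreal (discount_majorant \<theta> j g \<omega> (Suc n)) \<partial>clock_space)
    = (\<Sum>evt\<in>active g. ennreal (rate m k g evt / (total_rate g + \<theta>))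
        * (\<integral>\<^sup>+\<omega>. ennreal (discount_majorant \<theta> (Suc j) (jump V0 E g evt) \<omega> n) \<partial>clock_space))"
proof -
  have meas: "(\<lambda>\<omega>. ennreal (first_clock_discount \<theta> (rate m k g) (active g) evt (\<lambda>e. \<omega> (j, e))
      * discount_majorant \<theta> (Suc j) (jump V0 E g evt) \<omega> n)) \<in> borel_measurable clock_space"
    if evt: "evt \<in> active g" for evt
    using jump_admissible_mass[OF g evt] unfolding clock_space_def
    by (intro measurable_compose[OF _ measurable_ennreal] borel_measurable_times
        borel_measurable_first_clock_discount_step[OF g evt] borel_measurable_discount_majorant)
      auto
  have "(\<integral>\<^sup>+\<omega>. ennreal (discount_majorant \<theta> j g \<omega> (Suc n)) \<partial>clock_space)
      = (\<Sum>evt\<in>active g. \<integral>\<^sup>+\<omega>. ennreal (first_clock_discount \<theta> (rate m k g) (active g) evt (\<lambda>e. \<omega> (j, e))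
          * discount_majorant \<theta> (Suc j) (jump V0 E g evt) \<omega> n) \<partial>clock_space)"
    unfolding discount_majorant.simps
    by (subst sum_ennreal[symmetric], simp add: mult_nonneg_nonneg first_clock_discount_nonneg
        discount_majorant_nonneg, rule nn_integral_sum) (rule meas)
  also have "\<dots> = (\<Sum>evt\<in>active g. ennreal (rate m k g evt / (total_rate g + \<theta>))
        * (\<integral>\<^sup>+\<omega>. ennreal (discount_majorant \<theta> (Suc j) (jump V0 E g evt) \<omega> n) \<partial>clock_space))"
    using g \<theta> jump_admissible_mass[OF g]
    by (intro sum.cong refl nn_integral_first_clock_discount_times_majorant) auto
  finally show ?thesis .
qed

lemma nn_integral_discount_majorant_le:
  "admissible g \<Longrightarrow> 0 < \<theta>
    \<Longrightarrow> (\<integral>\<^sup>+\<omega>. ennreal (discount_majorant \<theta> j g \<omega> n) \<partial>clock_space) \<le> ennreal (discount_bound \<theta> n (mass g))"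
proof (induction n arbitrary: j g)
  case 0
  interpret prob_space clock_space
    unfolding clock_space_def by (rule prob_space_PiM) (rule prob_space_Exp1)
  show ?case by (simp add: emeasure_space_1 discount_bound_def)
next
  case (Suc n)
  define K where "K = discount_bound \<theta> n (mass g + real (D + 2))"
  have K: "0 \<le> K" unfolding K_def using Suc.prems mass_nonneg by (intro discount_bound_nonneg) auto
  have IH: "(\<integral>\<^sup>+\<omega>. ennreal (discount_majorant \<theta> (Suc j) (jump V0 E g evt) \<omega> n) \<partial>clock_space) \<le> ennreal K"
    if evt: "evt \<in> active g" for evt
  proof -
    note next_state = jump_admissible_mass[OF Suc.prems(1) evt]
    have "(\<integral>\<^sup>+\<omega>. ennreal (discount_majorant \<theta> (Suc j) (jump V0 E g evt) \<omega> n) \<partial>clock_space)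
        \<le> ennreal (discount_bound \<theta> n (mass (jump V0 E g evt)))"
      using next_state Suc.prems(2) by (intro Suc.IH) auto
    also have "\<dots> \<le> ennreal K"
      unfolding K_def using next_state Suc.prems(2) by (intro ennreal_leI discount_bound_mono mass_nonneg) auto
    finally show ?thesis .
  qed
  have "(\<integral>\<^sup>+\<omega>. ennreal (discount_majorant \<theta> j g \<omega> (Suc n)) \<partial>clock_space)
      \<le> (\<Sum>evt\<in>active g. ennreal (rate m k g evt / (total_rate g + \<theta>)) * ennreal K)"
    unfolding nn_integral_discount_majorant_Suc[OF Suc.prems(1) less_imp_le[OF Suc.prems(2)]]
    by (intro sum_mono mult_left_mono IH) auto
  also have "\<dots> = ennreal (total_rate g / (total_rate g + \<theta>) * K)"
    using K total_rate_nonneg[of g] Suc.prems(2)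
    by (simp add: ennreal_mult[symmetric] sum_ennreal total_rate_def sum_distrib_right sum_divide_distrib
        rate_pos less_imp_le)
  also have "\<dots> \<le> ennreal (discount_bound \<theta> (Suc n) (mass g))"
    unfolding discount_bound_Suc K_def[symmetric]
    using total_rate_nonneg total_rate_le[OF Suc.prems(1)] Suc.prems(2) K
    by (intro ennreal_leI mult_right_mono divide_self_add_mono) auto
  finally show ?case .
qed

section \<open>Summation over the jumps\<close>

text \<open>The summand 1 makes every term at least 1, so that the series bounding
  \<open>\<parallel>f\<^sub>t\<parallel>\<^sub>\<alpha>\<^sup>\<alpha>\<close> below diverges on explosion.\<close>
definition normpow_bound :: "real \<Rightarrow> real \<Rightarrow> nat \<Rightarrow> real" where
  "normpow_bound \<alpha> s n = M * (s + real n * real (D + 2) + 1) powr \<alpha> + 1"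

lemma normpow_bound_ge_1: "1 \<le> normpow_bound \<alpha> s n"
  using M_pos by (simp add: normpow_bound_def)

lemma normpow_state_le_suminf:
  assumes f: "admissible f" and t: "0 \<le> t" and \<alpha>: "1 \<le> \<alpha>"
  shows "(case ips_state m k V0 E f \<omega> t of None \<Rightarrow> \<infinity> | Some g \<Rightarrow> ennreal (normpow V E m k \<alpha> g))
    \<le> (\<Sum>n. ennreal (normpow_bound \<alpha> (mass f) n) * indicator {..ereal t} (snd (chain_from 0 f \<omega> n)))"
    (is "_ \<le> suminf ?u")
proof -
  define N where "N = {n. snd (chain_from 0 f \<omega> n) \<le> ereal t}"
  have ips: "ips_state m k V0 E f \<omega> t = (if finite N then Some (fst (chain_from 0 f \<omega> (Max N))) else None)"
    by (simp add: ips_state_def jchain_eq_chain_from N_def Let_def)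
  have u_N: "?u n = ennreal (normpow_bound \<alpha> (mass f) n)" if "n \<in> N" for n
    using that by (simp add: N_def)
  show ?thesis
  proof (cases "finite N")
    case True
    have "0 \<in> N" using t by (simp add: N_def zero_ereal_def)
    then have K: "Max N \<in> N" using True by (intro Max_in) auto
    let ?g = "fst (chain_from 0 f \<omega> (Max N))"
    note g = chain_from_admissible_mass[OF f, of 0 \<omega> "Max N"]
    have "normpow V E m k \<alpha> ?g \<le> M * (mass ?g + 1) powr \<alpha>"
      using g \<alpha> by (intro normpow_le_mass) auto
    also have "\<dots> \<le> M * (mass f + real (Max N) * real (D + 2) + 1) powr \<alpha>"
      using g mass_nonneg[of ?g] M_pos \<alpha> by (intro mult_left_mono powr_mono2) auto
    also have "\<dots> \<le> normpow_bound \<alpha> (mass f) (Max N)" by (simp add: normpow_bound_def)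
    finally have "ennreal (normpow V E m k \<alpha> ?g) \<le> ?u (Max N)"
      using u_N[OF K] by (simp add: ennreal_leI)
    also have "\<dots> \<le> suminf ?u" by (rule ennreal_le_suminf)
    finally show ?thesis using True ips by simp
  next
    case False
    have "N \<subseteq> {n. 1 \<le> ?u n}"
      using u_N normpow_bound_ge_1 by (auto simp: ennreal_leI[of 1, simplified])
    then have "suminf ?u = \<infinity>"
      using False by (intro suminf_ennreal_eq_top_if_infinite) (auto dest: finite_subset)
    then show ?thesis using False ips by simp
  qed
qed

lemma expected_normpow_le:
  assumes f: "admissible f" and t: "0 \<le> t" and \<alpha>: "1 \<le> \<alpha>" and \<theta>: "0 < \<theta>"
  shows "expected_normpow V E m k V0 \<alpha> f t
    \<le> (\<Sum>n. ennreal (exp (\<theta> * t) * normpow_bound \<alpha> (mass f) n * discount_bound \<theta> n (mass f)))"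
proof -
  let ?w = "\<lambda>n. exp (\<theta> * t) * normpow_bound \<alpha> (mass f) n"
  let ?G = "\<lambda>\<omega> n. ennreal (discount_majorant \<theta> 0 f \<omega> n)"
  have w: "0 \<le> ?w n" for n using normpow_bound_ge_1[of \<alpha> "mass f" n] by simp
  have pointwise: "ennreal (normpow_bound \<alpha> (mass f) n) * indicator {..ereal t} (snd (chain_from 0 f \<omega> n))
      \<le> ennreal (?w n) * ?G \<omega> n" for \<omega> n
  proof -
    have "indicator {..ereal t} (snd (chain_from 0 f \<omega> n))
        \<le> ennreal (exp (\<theta> * t)) * discount \<theta> (snd (chain_from 0 f \<omega> n))"
      using \<theta> by (intro indicator_atMost_le_discount chain_from_time_not_minf) auto
    also have "\<dots> \<le> ennreal (exp (\<theta> * t)) * ?G \<omega> n"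
      by (intro mult_left_mono discount_chain_from_le f) simp
    finally have "indicator {..ereal t} (snd (chain_from 0 f \<omega> n)) \<le> ennreal (exp (\<theta> * t)) * ?G \<omega> n" .
    from mult_left_mono[OF this, of "ennreal (normpow_bound \<alpha> (mass f) n)"]
    show ?thesis
      using normpow_bound_ge_1[of \<alpha> "mass f" n] by (simp add: ennreal_mult ac_simps)
  qed
  have meas: "(\<lambda>\<omega>. ?G \<omega> n) \<in> borel_measurable clock_space" for n
    unfolding clock_space_def
    by (intro measurable_compose[OF _ measurable_ennreal] borel_measurable_discount_majorant f) simp
  have "expected_normpow V E m k V0 \<alpha> f t
      \<le> (\<integral>\<^sup>+\<omega>. (\<Sum>n. ennreal (?w n) * ?G \<omega> n) \<partial>clock_space)"
    unfolding expected_normpow_def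
    by (intro nn_integral_mono order_trans[OF normpow_state_le_suminf[OF f t \<alpha>]]
        suminf_le pointwise summableI)
  also have "\<dots> = (\<Sum>n. ennreal (?w n) * (\<integral>\<^sup>+\<omega>. ?G \<omega> n \<partial>clock_space))"
    using meas by (simp add: nn_integral_suminf nn_integral_cmult)
  also have "\<dots> \<le> (\<Sum>n. ennreal (?w n) * ennreal (discount_bound \<theta> n (mass f)))"
    using f \<theta> by (intro suminf_le mult_left_mono nn_integral_discount_majorant_le summableI) auto
  also have "\<dots> = (\<Sum>n. ennreal (?w n * discount_bound \<theta> n (mass f)))"
    using w \<theta> mass_nonneg by (simp add: ennreal_mult discount_bound_nonneg)
  finally show ?thesis .
qed

lemma discount_bound_le_fact_div_power:
  assumes s: "0 \<le> s" and p: "0 < p"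
  shows "discount_bound (M * (s + 1) * real (D + 2) * real p) n s \<le> fact p / real (n + 1) ^ p"
proof -
  define c where "c = M * (s + 1) * real (D + 2)"
  have c: "0 < c" using M_pos s by (simp add: c_def)
  have "discount_bound (c * real p) n s \<le> (\<Prod>i<n. real (i + 1) / real (i + 1 + p))"
    unfolding discount_bound_def
  proof (rule prod_mono)
    fix i
    define x where "x = M * (s + real i * real (D + 2))"
    have x: "0 \<le> x" using M_pos s by (simp add: x_def)
    have "s + real i * real (D + 2) \<le> (s + 1) * real (D + 2) * real (i + 1)"
      using s by (simp add: algebra_simps)
    then have "x \<le> c * real (i + 1)"
      using M_pos by (simp add: x_def c_def mult.assoc mult_left_mono)
    then have "x / (x + c * real p) \<le> c * real (i + 1) / (c * real (i + 1) + c * real p)"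
      using x c p by (intro divide_self_add_mono) auto
    also have "\<dots> = real (i + 1) / real (i + 1 + p)"
      using c by (simp add: distrib_left[symmetric])
    finally show "0 \<le> x / (x + c * real p) \<and> x / (x + c * real p) \<le> real (i + 1) / real (i + 1 + p)"
      using x c p by simp
  qed
  also have "\<dots> \<le> fact p / real (n + 1) ^ p" by (rule prod_ratio_le_fact_div_power)
  finally show ?thesis by (simp add: c_def)
qed

lemma normpow_bound_le_power:
  assumes s: "0 \<le> s" and \<alpha>: "1 \<le> \<alpha>" "\<alpha> \<le> real q"
  shows "normpow_bound \<alpha> s n \<le> (M * ((s + 1) * real (D + 2)) powr \<alpha> + 1) * real (n + 1) ^ q"
proof -
  have "s + real n * real (D + 2) + 1 \<le> (s + 1) * real (D + 2) * real (n + 1)"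
    using s by (simp add: algebra_simps)
  then have "(s + real n * real (D + 2) + 1) powr \<alpha> \<le> ((s + 1) * real (D + 2) * real (n + 1)) powr \<alpha>"
    using s \<alpha> by (intro powr_mono2) auto
  also have "\<dots> = ((s + 1) * real (D + 2)) powr \<alpha> * real (n + 1) powr \<alpha>"
    using s by (simp add: powr_mult)
  also have "\<dots> \<le> ((s + 1) * real (D + 2)) powr \<alpha> * real (n + 1) ^ q"
  proof -
    have "real (n + 1) powr \<alpha> \<le> real (n + 1) powr real q" using \<alpha> by (intro powr_mono) auto
    also have "\<dots> = real (n + 1) ^ q" by (simp add: powr_realpow)
    finally show ?thesis by (intro mult_left_mono) auto
  qed
  finally have "normpow_bound \<alpha> s n \<le> M * (((s + 1) * real (D + 2)) powr \<alpha> * real (n + 1) ^ q) + real (n + 1) ^ q"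
    unfolding normpow_bound_def using M_pos by (intro add_mono mult_left_mono) auto
  then show ?thesis by (simp add: algebra_simps)
qed

lemma summable_normpow_bound_discount_bound:
  assumes s: "0 \<le> s" and \<alpha>: "1 \<le> \<alpha>"
  defines "\<theta> \<equiv> M * (s + 1) * real (D + 2) * real (nat \<lceil>\<alpha>\<rceil> + 2)"
  shows "summable (\<lambda>n. normpow_bound \<alpha> s n * discount_bound \<theta> n s)"
proof -
  define q where "q = nat \<lceil>\<alpha>\<rceil>"
  define C where "C = (M * ((s + 1) * real (D + 2)) powr \<alpha> + 1) * fact (q + 2)"
  have \<theta>: "0 < \<theta>" using M_pos s by (simp add: \<theta>_def)
  have "\<alpha> \<le> real q" unfolding q_def using \<alpha> by linarith
  then have "normpow_bound \<alpha> s n * discount_bound \<theta> n s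
      \<le> ((M * ((s + 1) * real (D + 2)) powr \<alpha> + 1) * real (n + 1) ^ q) * (fact (q + 2) / real (n + 1) ^ (q + 2))"
    for n
    using discount_bound_le_fact_div_power[OF s, of "q + 2" n] discount_bound_nonneg[OF \<theta> s, of n]
      normpow_bound_le_power[OF s \<alpha>, of q n] normpow_bound_ge_1[of \<alpha> s n]
    unfolding \<theta>_def q_def by (intro mult_mono) auto
  also have "((M * ((s + 1) * real (D + 2)) powr \<alpha> + 1) * real (n + 1) ^ q) * (fact (q + 2) / real (n + 1) ^ (q + 2))
      = C * inverse (real (Suc n) ^ 2)" for n
  proof -
    have "real (n + 1) ^ (q + 2) = real (n + 1) ^ q * real (Suc n) ^ 2"
      by (simp only: power_add Suc_eq_plus1)
    moreover have "real (n + 1) ^ q \<noteq> 0" by simp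
    ultimately show ?thesis
      unfolding C_def by (simp only: divide_inverse inverse_mult_distrib) (simp add: ac_simps)
  qed
  finally have "norm (normpow_bound \<alpha> s n * discount_bound \<theta> n s) \<le> C * inverse (real (Suc n) ^ 2)" for n
    using normpow_bound_ge_1[of \<alpha> s n] discount_bound_nonneg[OF \<theta> s, of n] by simp
  moreover have "summable (\<lambda>n. C * inverse (real (Suc n) ^ 2))"
    by (intro summable_mult summable_Suc_iff[THEN iffD2] inverse_power_summable) simp
  ultimately show ?thesis by (blast intro: summable_comparison_test')
qed

lemma expected_normpow_finite:
  assumes f: "admissible f" and t: "0 \<le> t" and \<alpha>: "1 \<le> \<alpha>"
  shows "expected_normpow V E m k V0 \<alpha> f t < \<infinity>"
proof -
  define \<theta> where "\<theta> = M * (mass f + 1) * real (D + 2) * real (nat \<lceil>\<alpha>\<rceil> + 2)"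
  have \<theta>: "0 < \<theta>" using M_pos mass_nonneg[of f] by (simp add: \<theta>_def)
  let ?a = "\<lambda>n. exp (\<theta> * t) * normpow_bound \<alpha> (mass f) n * discount_bound \<theta> n (mass f)"
  have "summable ?a"
    using summable_mult[OF summable_normpow_bound_discount_bound[OF mass_nonneg \<alpha>], of "exp (\<theta> * t)"]
    by (simp add: \<theta>_def mult.assoc)
  moreover have "0 \<le> ?a n" for n
    using normpow_bound_ge_1[of \<alpha> "mass f" n] discount_bound_nonneg[OF \<theta> mass_nonneg] by simp
  ultimately have "(\<Sum>n. ennreal (?a n)) < \<infinity>"
    using ennreal_suminf_neq_top by (auto simp: less_top)
  then show ?thesis using expected_normpow_le[OF f t \<alpha> \<theta>] by (rule le_less_trans[rotated])
qed

end

theorem theorem2p2: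
  fixes V V0 V1 :: "'h::{real_inner, complete_space} set"
    and E :: "'h set set"
    and k :: "'h \<Rightarrow> 'h \<Rightarrow> real"
    and m :: "'h \<Rightarrow> real"
    and f :: "'h state"
    and t \<alpha> :: real
  assumes V_countable: "countable V"
    and E_edges: "E \<subseteq> {{x, y} | x y. x \<in> V \<and> y \<in> V \<and> x \<noteq> y}"
    and k_sym: "\<forall>x y. k x y = k y x"
    and k_nonneg: "\<forall>x y. 0 \<le> k x y"
    and k_zero: "\<forall>x y. {x, y} \<notin> E \<longrightarrow> k x y = 0"
    and m_pos: "\<forall>x\<in>V. 0 < m x"
    and deg_bounded: "\<exists>D::nat. \<forall>x\<in>V. finite {y. {x, y} \<in> E} \<and> card {y. {x, y} \<in> E} \<le> D"
    and M_finite: "\<exists>M::real. (\<forall>x\<in>V. 1 / m x \<le> M) \<and> (\<forall>x y. {x, y} \<in> E \<longrightarrow> k x y \<le> M)"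
    and partition: "V0 \<union> V1 = V" "V0 \<inter> V1 = {}"
    and t_nonneg: "0 \<le> t"
    and alpha_ge: "1 \<le> \<alpha>"
    and f_F0: "f \<in> F0 V E"
  shows "expected_normpow V E m k V0 \<alpha> f t < \<infinity>"
proof -
  obtain D :: nat where D: "\<forall>x\<in>V. finite {y. {x, y} \<in> E} \<and> card {y. {x, y} \<in> E} \<le> D"
    using deg_bounded by blast
  obtain M :: real where M: "(\<forall>x\<in>V. 1 / m x \<le> M) \<and> (\<forall>x y. {x, y} \<in> E \<longrightarrow> k x y \<le> M)"
    using M_finite by blast
  interpret ips_graph V V0 E k m D "max M 1"
    by unfold_locales (use E_edges k_nonneg m_pos D M partition in \<open>auto simp: le_max_iff_disj\<close>)
  show ?thesis
    using expected_normpow_finite[OF F0_admissible[OF f_F0] t_nonneg alpha_ge] .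
qed

end
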